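(* Let $R$ be a finite commutative local principal ideal ring with unity. Then the complement $\overline{\Gamma(R)}$ of the zero divisor graph of $R$ is a divisor graph.
   Context: For a commutative ring $S$ with unity, $Z(S)$ denotes its set of zero divisors. The zero divisor graph $\Gamma(S)$ is the simple graph whose vertex set is $Z(S)\setminus\{0\}$, two distinct vertices $a,b$ being adjacent iff $ab=0$. Its complement $\overline{\Gamma(S)}$ has the same vertex set, two distinct vertices $a,b$ being adjacent iff $ab\neq 0$. For a nonempty set $S$ of positive integers, the divisor graph $G(S)$ has vertex set $S$, with distinct $i,j$ adjacent iff $i\mid j$ or $j\mid i$. A graph is a divisor graph if it is isomorphic to $G(S)$ for some nonempty set $S$ of positive integers. A ring is local if it has a unique maximal ideal. *)

theory Defs
  imports "HOL-Algebra.Ideal"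
begin

definition zero_divisors :: "('a, 'b) ring_scheme \<Rightarrow> 'a set" where
  "zero_divisors R = {a \<in> carrier R. \<exists>b \<in> carrier R. b \<noteq> \<zero>\<^bsub>R\<^esub> \<and> a \<otimes>\<^bsub>R\<^esub> b = \<zero>\<^bsub>R\<^esub>}"

definition local_ring :: "('a, 'b) ring_scheme \<Rightarrow> bool" where
  "local_ring R \<longleftrightarrow> (\<exists>!M. maximalideal M R)"

definition principal_ideal_ring :: "('a, 'b) ring_scheme \<Rightarrow> bool" where
  "principal_ideal_ring R \<longleftrightarrow> (\<forall>I. ideal I R \<longrightarrow> (\<exists>a \<in> carrier R. I = PIdl\<^bsub>R\<^esub> a))"

definition divisor_graph_adj :: "nat \<Rightarrow> nat \<Rightarrow> bool" where
  "divisor_graph_adj i j \<longleftrightarrow> i \<noteq> j \<and> (i dvd j \<or> j dvd i)"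

text \<open>A simple graph (V, E) (E symmetric, only consulted on distinct vertices) is a divisor
  graph if it is isomorphic to G(S) for some nonempty set S of positive integers.\<close>
definition is_divisor_graph :: "'v set \<Rightarrow> ('v \<Rightarrow> 'v \<Rightarrow> bool) \<Rightarrow> bool" where
  "is_divisor_graph V E \<longleftrightarrow>
     (\<exists>S :: nat set. S \<noteq> {} \<and> (\<forall>n \<in> S. 0 < n) \<and>
        (\<exists>f. bij_betw f V S \<and>
             (\<forall>a \<in> V. \<forall>b \<in> V. a \<noteq> b \<longrightarrow> (E a b \<longleftrightarrow> divisor_graph_adj (f a) (f b)))))"

definition zdg_vertices :: "('a, 'b) ring_scheme \<Rightarrow> 'a set" where
  "zdg_vertices R = zero_divisors R - {\<zero>\<^bsub>R\<^esub>}"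

definition compl_zdg_adj :: "('a, 'b) ring_scheme \<Rightarrow> 'a \<Rightarrow> 'a \<Rightarrow> bool" where
  "compl_zdg_adj R a b \<longleftrightarrow> a \<noteq> b \<and> a \<otimes>\<^bsub>R\<^esub> b \<noteq> \<zero>\<^bsub>R\<^esub>"

end

theory Submission
  imports Defs "HOL-Algebra.Ring_Divisibility"
begin

(* In a finite local principal ideal ring R the principal ideals form a chain, and
   |Ra| * |Ann a| = |R| because x |-> xa maps R onto Ra with fibres the cosets of Ann a.
   As Ann a is itself principal, ab = 0 iff Rb is contained in Ann a iff |Ra| * |Rb| <= |R|.
   Hence the complement of the zero divisor graph is a threshold graph: a and b are adjacent
   iff |Ra| * |Rb| > |R|. The vertices with |Ra|^2 > |R| form a clique, the others an
   independent set, and the neighbourhoods of the independent vertices inside the clique are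
   nested. Such a graph is a divisor graph: code the clique by powers of 2 in order of
   decreasing weight, and the j-th independent vertex by 2^e 3^j 5^(N-j), where exactly the
   codes of its neighbours divide 2^e and the odd parts make these codes pairwise
   incomparable. *)

definition annihilator :: "('a, 'b) ring_scheme \<Rightarrow> 'a \<Rightarrow> 'a set" where
  "annihilator R a = {x \<in> carrier R. a \<otimes>\<^bsub>R\<^esub> x = \<zero>\<^bsub>R\<^esub>}"

lemma (in ring) finite_ideal_in_maximalideal:
  assumes fin: "finite (carrier R)" and I: "ideal I R" "I \<noteq> carrier R"
  shows "\<exists>M. maximalideal M R \<and> I \<subseteq> M"
proof -
  let ?C = "{J. ideal J R \<and> I \<subseteq> J \<and> J \<noteq> carrier R}"
  have "finite ?C"
    by (rule finite_subset[of _ "Pow (carrier R)"]) (auto dest: ideal.Icarr simp: fin)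
  then obtain M where M: "M \<in> ?C" and max: "\<And>J. J \<in> ?C \<Longrightarrow> M \<subseteq> J \<Longrightarrow> M = J"
    using finite_has_maximal2[of ?C I] I by auto
  have "maximalideal M R"
    using M max by (intro maximalidealI) auto
  with M show ?thesis by blast
qed

context cring
begin

lemma annihilator_ideal:
  assumes a: "a \<in> carrier R"
  shows "ideal (annihilator R a) R"
proof (rule idealI[OF ring_axioms])
  show "subgroup (annihilator R a) (add_monoid R)"
    using a by (intro add.subgroupI) (auto simp: annihilator_def r_distr r_minus)
next
  fix x y assume x: "x \<in> annihilator R a" and y: "y \<in> carrier R"
  then have "a \<otimes> (x \<otimes> y) = \<zero>"
    using a by (simp add: annihilator_def m_assoc[symmetric])
  then show "x \<otimes> y \<in> annihilator R a" "y \<otimes> x \<in> annihilator R a"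
    using x y by (auto simp: annihilator_def m_comm[of y x])
qed

lemma local_maximalideal_eq_nonunits:
  assumes fin: "finite (carrier R)" and loc: "local_ring R" and M: "maximalideal M R"
  shows "M = carrier R - Units R"
proof
  interpret maximalideal M R by fact
  show "M \<subseteq> carrier R - Units R"
  proof
    fix u assume "u \<in> M"
    moreover have "u \<notin> Units R"
    proof
      assume "u \<in> Units R"
      with \<open>u \<in> M\<close> have "inv u \<otimes> u \<in> M" by (intro I_l_closed) auto
      with \<open>u \<in> Units R\<close> have "M = carrier R" by (intro one_imp_carrier) simp
      with I_notcarr show False by simp
    qed
    ultimately show "u \<in> carrier R - Units R" by auto
  qed
  show "carrier R - Units R \<subseteq> M"
  proof
    fix x assume x: "x \<in> carrier R - Units R"
    then have "PIdl x \<noteq> carrier R" using ideal_eq_carrier_iff by auto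
    then obtain M' where "maximalideal M' R" "PIdl x \<subseteq> M'"
      using finite_ideal_in_maximalideal[OF fin cgenideal_ideal] x by blast
    moreover have "M' = M"
      using loc M \<open>maximalideal M' R\<close> unfolding local_ring_def by blast
    ultimately show "x \<in> M" using cgenideal_self x by blast
  qed
qed

lemma local_nonunit_mult_eq_self:
  assumes fin: "finite (carrier R)" and loc: "local_ring R"
    and e: "e \<in> carrier R" "e \<notin> Units R" and d: "d \<in> carrier R" "e \<otimes> d = d"
  shows "d = \<zero>"
proof -
  obtain M where M: "maximalideal M R" using loc unfolding local_ring_def by blast
  interpret maximalideal M R by fact
  have nonunits: "M = carrier R - Units R"
    using local_maximalideal_eq_nonunits[OF fin loc M] .
  have "\<one> \<ominus> e \<in> Units R"
  proof (rule ccontr)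
    assume "\<one> \<ominus> e \<notin> Units R"
    then have "e \<oplus> (\<one> \<ominus> e) \<in> M" using e nonunits by (intro a_closed) auto
    moreover have "e \<oplus> (\<one> \<ominus> e) = \<one>" using e by algebra
    ultimately show False using nonunits by auto
  qed
  moreover have "(\<one> \<ominus> e) \<otimes> d = \<zero>"
  proof -
    have "(\<one> \<ominus> e) \<otimes> d = d \<ominus> e \<otimes> d" using e d by algebra
    then show ?thesis using d by (simp add: r_neg minus_eq)
  qed
  ultimately show "d = \<zero>" using d Units_l_cancel[of "\<one> \<ominus> e" d \<zero>] by auto
qed

lemma local_principal_ideals_chain:
  assumes fin: "finite (carrier R)" and loc: "local_ring R" and pir: "principal_ideal_ring R"
    and a: "a \<in> carrier R" and b: "b \<in> carrier R"
  shows "PIdl a \<subseteq> PIdl b \<or> PIdl b \<subseteq> PIdl a"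
proof -
  obtain M where M: "maximalideal M R" using loc unfolding local_ring_def by blast
  interpret M: maximalideal M R by fact
  have nonunits: "M = carrier R - Units R"
    using local_maximalideal_eq_nonunits[OF fin loc M] .
  have ideals: "ideal (PIdl a) R" "ideal (PIdl b) R" using a b by (auto intro: cgenideal_ideal)
  obtain d where d: "d \<in> carrier R" "PIdl a <+> PIdl b = PIdl d"
    using pir add_ideals[OF ideals] unfolding principal_ideal_ring_def by blast
  have "PIdl a \<union> PIdl b \<subseteq> PIdl d"
    using genideal_self[of "PIdl a \<union> PIdl b"] union_genideal[OF ideals] d ideals
    by (auto dest: ideal.Icarr)
  then obtain x y where x: "x \<in> carrier R" "a = x \<otimes> d" and y: "y \<in> carrier R" "b = y \<otimes> d"
    using cgenideal_self[OF a] cgenideal_self[OF b] unfolding cgenideal_def by blast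
  have "d \<in> PIdl a <+> PIdl b" using d cgenideal_self by simp
  then obtain r s where r: "r \<in> carrier R" and s: "s \<in> carrier R"
    and d_eq: "d = r \<otimes> a \<oplus> s \<otimes> b"
    unfolding set_add_def' cgenideal_def by blast
  consider "x \<in> Units R" | "y \<in> Units R" | "x \<in> M" "y \<in> M" using x y nonunits by blast
  then show ?thesis
  proof cases
    case 1
    then have "PIdl a = PIdl d"
      using x d associatedI2[of x a d] associated_iff_same_ideal[of a d] by (simp add: m_comm)
    then show ?thesis using \<open>PIdl a \<union> PIdl b \<subseteq> PIdl d\<close> by blast
  next
    case 2
    then have "PIdl b = PIdl d"
      using y d associatedI2[of y b d] associated_iff_same_ideal[of b d] by (simp add: m_comm)
    then show ?thesis using \<open>PIdl a \<union> PIdl b \<subseteq> PIdl d\<close> by blast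
  next
    case 3
    let ?e = "r \<otimes> x \<oplus> s \<otimes> y"
    have "?e \<in> M" using 3 r s by (intro M.a_closed M.I_l_closed)
    moreover have "?e \<otimes> d = d" using d_eq x y r s d by algebra
    ultimately have "d = \<zero>"
      using local_nonunit_mult_eq_self[OF fin loc] nonunits d by blast
    then have "a = \<zero>" using x by simp
    then show ?thesis
      using cgenideal_minimal[OF ideals(2)] additive_subgroup.zero_closed[OF ideal.axioms(1)[OF ideals(2)]]
      by auto
  qed
qed

lemma card_cgenideal_mult_card_annihilator:
  assumes fin: "finite (carrier R)" and a: "a \<in> carrier R"
  shows "card (PIdl a) * card (annihilator R a) = card (carrier R)"
proof -
  let ?fibre = "\<lambda>y. {x \<in> carrier R. x \<otimes> a = y}"
  have fibre: "?fibre (x0 \<otimes> a) = (\<lambda>z. z \<oplus> x0) ` annihilator R a" if x0: "x0 \<in> carrier R" for x0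
  proof (intro equalityI subsetI)
    fix x assume "x \<in> ?fibre (x0 \<otimes> a)"
    then have x: "x \<in> carrier R" "x \<otimes> a = x0 \<otimes> a" by auto
    then have "a \<otimes> (x \<ominus> x0) = x \<otimes> a \<ominus> x0 \<otimes> a" using a x0 by algebra
    then have "x \<ominus> x0 \<in> annihilator R a" using a x x0 by (simp add: annihilator_def r_neg minus_eq)
    moreover have "x = (x \<ominus> x0) \<oplus> x0" using x x0 by algebra
    ultimately show "x \<in> (\<lambda>z. z \<oplus> x0) ` annihilator R a" by blast
  next
    fix x assume "x \<in> (\<lambda>z. z \<oplus> x0) ` annihilator R a"
    then obtain z where z: "z \<in> carrier R" "a \<otimes> z = \<zero>" "x = z \<oplus> x0"
      by (auto simp: annihilator_def)
    then have "x \<otimes> a = a \<otimes> z \<oplus> x0 \<otimes> a" using a x0 by algebra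
    then show "x \<in> ?fibre (x0 \<otimes> a)" using z x0 a by simp
  qed
  have translate_inj: "inj_on (\<lambda>z. z \<oplus> x0) (annihilator R a)" if "x0 \<in> carrier R" for x0
    using that by (intro inj_onI) (auto simp: annihilator_def)
  have "card (carrier R) = (\<Sum>y\<in>(\<lambda>x. x \<otimes> a) ` carrier R. card (?fibre y))"
    using sum.image_gen[OF fin, of "\<lambda>_. 1::nat" "\<lambda>x. x \<otimes> a"] by simp
  also have "\<dots> = (\<Sum>y\<in>PIdl a. card (annihilator R a))"
  proof (rule sum.cong)
    show "(\<lambda>x. x \<otimes> a) ` carrier R = PIdl a" unfolding cgenideal_def by blast
  next
    fix y assume "y \<in> PIdl a"
    then obtain x0 where x0: "x0 \<in> carrier R" "y = x0 \<otimes> a" unfolding cgenideal_def by blast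
    then show "card (?fibre y) = card (annihilator R a)"
      using fibre[OF x0(1)] card_image[OF translate_inj[OF x0(1)]] by simp
  qed
  finally show ?thesis by simp
qed

lemma local_mult_eq_zero_iff_card:
  assumes fin: "finite (carrier R)" and loc: "local_ring R" and pir: "principal_ideal_ring R"
    and a: "a \<in> carrier R" and b: "b \<in> carrier R"
  shows "a \<otimes> b = \<zero> \<longleftrightarrow> card (PIdl a) * card (PIdl b) \<le> card (carrier R)"
proof -
  have ann: "ideal (annihilator R a) R" using annihilator_ideal[OF a] .
  then obtain c where c: "c \<in> carrier R" "annihilator R a = PIdl c"
    using pir unfolding principal_ideal_ring_def by blast
  have finite_ideal: "finite I" if "ideal I R" for I
    using fin by (rule finite_subset[rotated]) (use ideal.Icarr[OF that] in blast)
  have "card (PIdl a) > 0"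
    using cgenideal_self[OF a] finite_ideal[OF cgenideal_ideal[OF a]] by (auto simp: card_gt_0_iff)
  have "a \<otimes> b = \<zero> \<longleftrightarrow> PIdl b \<subseteq> annihilator R a"
    using cgenideal_minimal[OF ann] cgenideal_self[OF b] b by (auto simp: annihilator_def)
  also have "\<dots> \<longleftrightarrow> card (PIdl b) \<le> card (annihilator R a)"
  proof
    assume "card (PIdl b) \<le> card (annihilator R a)"
    then have "\<not> annihilator R a \<subset> PIdl b"
      using psubset_card_mono[OF finite_ideal[OF cgenideal_ideal[OF b]]] by (meson leD)
    then show "PIdl b \<subseteq> annihilator R a"
      using local_principal_ideals_chain[OF fin loc pir b c(1)] c(2) by blast
  qed (simp add: card_mono finite_ideal[OF ann])
  also have "\<dots> \<longleftrightarrow> card (PIdl a) * card (PIdl b) \<le> card (PIdl a) * card (annihilator R a)"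
    using \<open>card (PIdl a) > 0\<close> by simp
  finally show ?thesis using card_cgenideal_mult_card_annihilator[OF fin a] by simp
qed

end

lemma two_pow_dvd_two_three_five_iff: "(2::nat) ^ i dvd 2 ^ e * (3 ^ j * 5 ^ k) \<longleftrightarrow> i \<le> e"
proof -
  have "coprime ((2::nat) ^ i) (3 ^ j * 5 ^ k)" by simp
  then show ?thesis by (simp add: coprime_dvd_mult_left_iff dvd_power_iff_le)
qed

lemma two_three_five_not_dvd_two_pow:
  assumes "0 < k" shows "\<not> (2::nat) ^ e * (3 ^ j * 5 ^ k) dvd 2 ^ i"
proof
  assume "(2::nat) ^ e * (3 ^ j * 5 ^ k) dvd 2 ^ i"
  moreover have "(5::nat) dvd 2 ^ e * (3 ^ j * 5 ^ k)" using assms by (simp add: dvd_power)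
  ultimately have "(5::nat) dvd 2 ^ i" by (rule dvd_trans[rotated])
  moreover have "coprime (5::nat) 2" by (simp add: coprime_iff_gcd_eq_1 gcd_non_0_nat)
  then have "coprime (5::nat) (2 ^ i)" by simp
  ultimately show False using coprime_common_divisor_nat[of 5 "2 ^ i" 5] by simp
qed

lemma two_three_five_dvd_imp_le:
  assumes "(2::nat) ^ e * (3 ^ j * 5 ^ k) dvd 2 ^ e' * (3 ^ j' * 5 ^ k')"
  shows "j \<le> j'" "k \<le> k'"
proof -
  have "coprime (3::nat) 5" by (simp add: coprime_iff_gcd_eq_1 gcd_non_0_nat)
  then have coprime: "coprime ((3::nat) ^ j) (2 ^ e' * 5 ^ k')" "coprime ((5::nat) ^ k) (2 ^ e' * 3 ^ j')"
    by (simp_all add: coprime_commute)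
  have "(3::nat) ^ j dvd 3 ^ j' * (2 ^ e' * 5 ^ k')"
    using dvd_trans[OF _ assms, of "3 ^ j"] by (simp add: ac_simps)
  then show "j \<le> j'" using coprime(1) by (simp add: coprime_dvd_mult_left_iff dvd_power_iff_le)
  have "(5::nat) ^ k dvd 5 ^ k' * (2 ^ e' * 3 ^ j')"
    using dvd_trans[OF _ assms, of "5 ^ k"] by (simp add: ac_simps)
  then show "k \<le> k'" using coprime(2) by (simp add: coprime_dvd_mult_left_iff dvd_power_iff_le)
qed

lemma product_between_squares:
  fixes x y :: nat
  shows "min (x * x) (y * y) \<le> x * y" "x * y \<le> max (x * x) (y * y)"
proof -
  have squares: "x * x \<le> x * y \<and> y * x \<le> y * y" if "x \<le> y" for x y :: nat
    using that by (simp add: mult_le_mono2)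
  show "min (x * x) (y * y) \<le> x * y" "x * y \<le> max (x * x) (y * y)"
    using squares[of x y] squares[of y x] mult.commute[of x y] by linarith+
qed

lemma ex_antitone_injective_rank:
  fixes w :: "'v \<Rightarrow> nat"
  assumes "finite V"
  shows "\<exists>h :: 'v \<Rightarrow> nat. inj_on h V \<and> (\<forall>a\<in>V. \<forall>b\<in>V. w a < w b \<longrightarrow> h b < h a)"
proof -
  obtain idx where idx: "bij_betw idx V {0..<card V}"
    using ex_bij_betw_finite_nat[OF assms] by blast
  define C where "C = Max (w ` V)"
  define h where "h a = card V * (C - w a) + idx a" for a
  have antitone: "h b < h a" if "a \<in> V" "b \<in> V" "w a < w b" for a b
  proof -
    have "w b \<le> C" unfolding C_def using assms that by simp
    then have "C - w b + 1 \<le> C - w a" using that by linarith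
    then have "card V * (C - w b + 1) \<le> card V * (C - w a)" by (rule mult_le_mono2)
    moreover have "idx b < card V" using bij_betwE[OF idx] that by auto
    ultimately show ?thesis unfolding h_def by (simp add: algebra_simps)
  qed
  have "inj_on h V"
  proof (rule inj_onI)
    fix a b assume ab: "a \<in> V" "b \<in> V" "h a = h b"
    then have "w a = w b" using antitone[of a b] antitone[of b a] by (metis less_irrefl nat_neq_iff)
    then have "idx a = idx b" using ab(3) unfolding h_def by simp
    then show "a = b" using ab idx by (meson bij_betw_imp_inj_on inj_onD)
  qed
  then show ?thesis using antitone by blast
qed

lemma nested_split_graph_is_divisor_graph:
  fixes V K :: "'v set" and E :: "'v \<Rightarrow> 'v \<Rightarrow> bool" and h e :: "'v \<Rightarrow> nat"
  assumes fin: "finite V" and ne: "V \<noteq> {}" and inj: "inj_on h K"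
    and sym: "\<And>a b. a \<in> V \<Longrightarrow> b \<in> V \<Longrightarrow> E a b \<longleftrightarrow> E b a"
    and clique: "\<And>a b. a \<in> K \<Longrightarrow> b \<in> K \<Longrightarrow> a \<noteq> b \<Longrightarrow> E a b"
    and independent: "\<And>a b. a \<in> V - K \<Longrightarrow> b \<in> V - K \<Longrightarrow> a \<noteq> b \<Longrightarrow> \<not> E a b"
    and nested: "\<And>a b. a \<in> K \<Longrightarrow> b \<in> V - K \<Longrightarrow> E a b \<longleftrightarrow> h a < e b"
  shows "is_divisor_graph V E"
proof -
  let ?N = "card (V - K)"
  obtain idx where idx: "bij_betw idx (V - K) {0..<?N}"
    using ex_bij_betw_finite_nat fin by blast
  have idx_less: "idx b < ?N" if "b \<in> V - K" for b
    using bij_betwE[OF idx] that by auto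
  define f :: "'v \<Rightarrow> nat"
    where "f a = (if a \<in> K then 2 ^ Suc (h a) else 2 ^ e a * (3 ^ idx a * 5 ^ (?N - idx a)))" for a
  have mixed: "f a \<noteq> f b \<and> (E a b \<longleftrightarrow> f a dvd f b \<or> f b dvd f a)"
    if a: "a \<in> K" and b: "b \<in> V - K" for a b
  proof -
    have "\<not> f b dvd f a"
      using a b two_three_five_not_dvd_two_pow[of "?N - idx b" "e b" "idx b" "Suc (h a)"] idx_less[OF b]
      unfolding f_def by simp
    moreover have "f a dvd f b \<longleftrightarrow> h a < e b"
      using a b two_pow_dvd_two_three_five_iff[of "Suc (h a)" "e b" "idx b" "?N - idx b"]
      unfolding f_def by (simp add: Suc_le_eq)
    ultimately show ?thesis using nested[OF a b] by auto
  qed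
  have independent_codes: "\<not> f a dvd f b"
    if "a \<in> V - K" "b \<in> V - K" "a \<noteq> b" for a b
  proof
    assume "f a dvd f b"
    then have "idx a \<le> idx b" "?N - idx a \<le> ?N - idx b"
      using that two_three_five_dvd_imp_le unfolding f_def by auto
    then have "idx a = idx b" using idx_less that by fastforce
    then show False using that idx by (meson bij_betw_imp_inj_on inj_onD)
  qed
  have code: "f a \<noteq> f b \<and> (E a b \<longleftrightarrow> f a dvd f b \<or> f b dvd f a)"
    if ab: "a \<in> V" "b \<in> V" "a \<noteq> b" for a b
  proof -
    consider "a \<in> K" "b \<in> K" | "a \<in> K" "b \<in> V - K" | "a \<in> V - K" "b \<in> K"
      | "a \<in> V - K" "b \<in> V - K"
      using ab by blast
    then show ?thesis
    proof cases
      case 1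
      then have "f a = 2 ^ Suc (h a)" "f b = 2 ^ Suc (h b)" "h a \<noteq> h b"
        using inj ab(3) unfolding f_def by (auto dest: inj_onD)
      then show ?thesis using clique[OF 1 ab(3)] by (auto simp: dvd_power_iff_le)
    next
      case 2
      then show ?thesis using mixed by blast
    next
      case 3
      then show ?thesis using mixed[OF 3(2,1)] sym[OF ab(1,2)] by auto
    next
      case 4
      then have "\<not> E a b" "\<not> f a dvd f b" "\<not> f b dvd f a"
        using independent independent_codes ab by auto
      then show ?thesis by auto
    qed
  qed
  show ?thesis unfolding is_divisor_graph_def divisor_graph_adj_def
  proof (intro exI conjI)
    show "f ` V \<noteq> {}" using ne by simp
    show "\<forall>n\<in>f ` V. 0 < n" by (auto simp: f_def)
    show "bij_betw f V (f ` V)" by (intro inj_on_imp_bij_betw inj_onI) (use code in blast)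
    show "\<forall>a\<in>V. \<forall>b\<in>V. a \<noteq> b \<longrightarrow> E a b = (f a \<noteq> f b \<and> (f a dvd f b \<or> f b dvd f a))"
      using code by blast
  qed
qed

lemma product_threshold_graph_is_divisor_graph:
  fixes V :: "'v set" and E :: "'v \<Rightarrow> 'v \<Rightarrow> bool" and w :: "'v \<Rightarrow> nat" and c :: nat
  assumes fin: "finite V" and ne: "V \<noteq> {}"
    and adj: "\<And>a b. a \<in> V \<Longrightarrow> b \<in> V \<Longrightarrow> a \<noteq> b \<Longrightarrow> E a b \<longleftrightarrow> c < w a * w b"
  shows "is_divisor_graph V E"
proof -
  obtain h :: "'v \<Rightarrow> nat" where inj: "inj_on h V" and antitone: "\<And>a b. a \<in> V \<Longrightarrow> b \<in> V \<Longrightarrow> w a < w b \<Longrightarrow> h b < h a"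
    using ex_antitone_injective_rank[OF fin, of w] by blast
  define K where "K = {a \<in> V. c < w a * w a}"
  define T where "T b = {a \<in> K. c < w a * w b}" for b
  define e where "e b = (if T b = {} then 0 else Suc (Max (h ` T b)))" for b
  have finite_T: "finite (T b)" for b
    using fin by (rule finite_subset[rotated]) (auto simp: T_def K_def)
  show ?thesis
  proof (rule nested_split_graph_is_divisor_graph[OF fin ne, where K = K and h = h and e = e])
    show "inj_on h K" using inj unfolding K_def by (auto intro: inj_on_subset)
  next
    fix a b assume "a \<in> K" "b \<in> K" "a \<noteq> b"
    then have "c < min (w a * w a) (w b * w b)" unfolding K_def by simp
    then have "c < w a * w b" using product_between_squares(1) by (rule less_le_trans)
    then show "E a b" using adj \<open>a \<in> K\<close> \<open>b \<in> K\<close> \<open>a \<noteq> b\<close> unfolding K_def by blast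
  next
    fix a b assume "a \<in> V - K" "b \<in> V - K" "a \<noteq> b"
    then have "max (w a * w a) (w b * w b) \<le> c" unfolding K_def by auto
    then have "\<not> c < w a * w b" using product_between_squares(2)[of "w a" "w b"] by linarith
    then show "\<not> E a b" using adj \<open>a \<in> V - K\<close> \<open>b \<in> V - K\<close> \<open>a \<noteq> b\<close> by blast
  next
    fix a b assume a: "a \<in> K" and b: "b \<in> V - K"
    have "a \<in> T b \<longleftrightarrow> h a < e b"
    proof
      assume "a \<in> T b"
      then show "h a < e b" using finite_T by (auto simp: e_def le_imp_less_Suc)
    next
      assume "h a < e b"
      then have "T b \<noteq> {}" "h a \<le> Max (h ` T b)" by (auto simp: e_def split: if_splits)
      moreover have "Max (h ` T b) \<in> h ` T b" using \<open>T b \<noteq> {}\<close> finite_T by simp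
      ultimately obtain a' where a': "a' \<in> T b" "h a \<le> h a'" by auto
      then have "w a' \<le> w a"
        using antitone[of a a'] a unfolding T_def K_def by force
      then have "w a' * w b \<le> w a * w b" by (rule mult_le_mono1)
      moreover have "c < w a' * w b" using a' unfolding T_def by simp
      ultimately have "c < w a * w b" by linarith
      then show "a \<in> T b" using a unfolding T_def by simp
    qed
    moreover have "E a b \<longleftrightarrow> c < w a * w b" using a b adj[of a b] unfolding K_def by blast
    ultimately show "E a b \<longleftrightarrow> h a < e b" using a unfolding T_def by blast
  next
    fix a b assume "a \<in> V" "b \<in> V"
    then show "E a b \<longleftrightarrow> E b a"
      using adj[of a b] adj[of b a] mult.commute[of "w a" "w b"] by (cases "a = b") simp_all
  qed
qed

theorem theorem2p1:
  fixes R :: "('a, 'b) ring_scheme"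
  assumes "cring R"
    and "finite (carrier R)"
    and "local_ring R"
    and "principal_ideal_ring R"
    and "zdg_vertices R \<noteq> {}"
  shows "is_divisor_graph (zdg_vertices R) (compl_zdg_adj R)"
proof -
  interpret cring R by fact
  have vertices: "zdg_vertices R \<subseteq> carrier R"
    unfolding zdg_vertices_def zero_divisors_def by blast
  show ?thesis
  proof (rule product_threshold_graph_is_divisor_graph
      [where w = "\<lambda>a. card (PIdl\<^bsub>R\<^esub> a)" and c = "card (carrier R)"])
    show "finite (zdg_vertices R)" using finite_subset[OF vertices assms(2)] .
    show "zdg_vertices R \<noteq> {}" by fact
    fix a b assume "a \<in> zdg_vertices R" "b \<in> zdg_vertices R" "a \<noteq> b"
    then show "compl_zdg_adj R a b \<longleftrightarrow> card (carrier R) < card (PIdl\<^bsub>R\<^esub> a) * card (PIdl\<^bsub>R\<^esub> b)"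
      using local_mult_eq_zero_iff_card[OF assms(2-4)] vertices
      unfolding compl_zdg_adj_def by (meson not_le subsetD)
  qed
qed

end
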